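(* Let $\Theta\colon\mathcal R\to L^0_P(\Omega;\mathbb R)$ be an infinitely divisible random measure with control measure $\chi$. Then every $f\in\mathcal S_{\rm det}$ satisfies \[\int_R\sup_{|\beta|\le1}a_\Theta(r,\beta f(r))\,\chi(dr)=\sup_{\gamma\in\mathcal S^1_{\rm det}}\int_Ra_\Theta(r,\gamma(r)f(r))\,\chi(dr).\]
   Context: Fix a probability space $(\Omega,\mathcal F,P)$. Let $R$ be a non-empty set and $\mathcal R$ a $\delta$-ring of subsets of $R$ (containing $\emptyset$, closed under finite unions, relative complements and countable intersections) with an increasing sequence $(R_k)\subseteq\mathcal R$ such that $\bigcup_kR_k=R$. An infinitely divisible random measure on $\mathcal R$ is a map $\Theta\colon\mathcal R\to L^0_P(\Omega;\mathbb R)$ which is $P$-a.s. countably additive on disjoint sequences in $\mathcal R$ with union in $\mathcal R$, has independent values on disjoint sets, and has infinitely divisible values. With $\tau(\alpha)=\alpha$ for $|\alpha|\le1$, $\tau(\alpha)=\alpha/|\alpha|$ otherwise, there exist a signed measure $a_0$, a measure $q_0$ on $\sigma(\mathcal R)$ and a $\sigma$-finite measure $\lambda_0$ on $\sigma(\mathcal R)\otimes\mathcal B(\mathbb R)$ with $E[e^{i\beta\Theta(A)}]=\exp\big(i\beta a_0(A)-\tfrac12\beta^2q_0(A)+\int(e^{i\beta\alpha}-1-i\beta\tau(\alpha))\lambda_0(A,d\alpha)\big)$. The control measure is $\chi(A)=|a_0|(A)+q_0(A)+\int(|\beta|^2\wedge1)\lambda_0(A,d\beta)$. Let $a=da_0/d\chi$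 and $\kappa$ a kernel with $\lambda_0(dr,d\beta)=\kappa(r,d\beta)\chi(dr)$; define $a_\Theta(r,\alpha)=\alpha a(r)+\int_{\mathbb R}(\tau(\alpha\beta)-\alpha\tau(\beta))\kappa(r,d\beta)$. $\mathcal S_{\rm det}$ is the set of functions $\sum_{k=1}^n\beta_k\mathbb 1_{A_k}$ with $\beta_k\in\mathbb R$ and disjoint $A_k\in\mathcal R$; $\mathcal S^1_{\rm det}$ is the subset with all $|\beta_k|\le1$. *)

theory Defs
  imports "HOL-Probability.Probability"
begin

definition delta_ring :: "'r set \<Rightarrow> 'r set set \<Rightarrow> bool" where
  "delta_ring R \<RR> \<longleftrightarrow> \<RR> \<subseteq> Pow R \<and> {} \<in> \<RR> \<and>
     (\<forall>A\<in>\<RR>. \<forall>B\<in>\<RR>. A \<union> B \<in> \<RR> \<and> A - B \<in> \<RR>) \<and>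
     (\<forall>A :: nat \<Rightarrow> 'r set. range A \<subseteq> \<RR> \<longrightarrow> (\<Inter>n. A n) \<in> \<RR>)"

definition admissible_space :: "'r set \<Rightarrow> 'r set set \<Rightarrow> bool" where
  "admissible_space R \<RR> \<longleftrightarrow> R \<noteq> {} \<and> delta_ring R \<RR> \<and>
     (\<exists>Rk :: nat \<Rightarrow> 'r set. range Rk \<subseteq> \<RR> \<and> incseq Rk \<and> (\<Union>k. Rk k) = R)"

fun conv_power :: "real measure \<Rightarrow> nat \<Rightarrow> real measure" where
  "conv_power \<nu> 0 = return borel 0"
| "conv_power \<nu> (Suc n) = convolution \<nu> (conv_power \<nu> n)"

definition inf_divisible :: "real measure \<Rightarrow> bool" where
  "inf_divisible \<mu> \<longleftrightarrow>
     (\<forall>n::nat. n > 0 \<longrightarrow> (\<exists>\<nu>. prob_space \<nu> \<and> sets \<nu> = sets borel \<and> conv_power \<nu> n = \<mu>))"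

definition ID_random_measure ::
  "'w measure \<Rightarrow> 'r set \<Rightarrow> 'r set set \<Rightarrow> ('r set \<Rightarrow> 'w \<Rightarrow> real) \<Rightarrow> bool" where
  "ID_random_measure P R \<RR> \<Theta> \<longleftrightarrow>
     prob_space P \<and> admissible_space R \<RR> \<and>
     (\<forall>A\<in>\<RR>. \<Theta> A \<in> borel_measurable P) \<and>
     (\<forall>A :: nat \<Rightarrow> 'r set. range A \<subseteq> \<RR> \<longrightarrow> disjoint_family A \<longrightarrow> (\<Union>n. A n) \<in> \<RR> \<longrightarrow>
        (AE \<omega> in P. (\<lambda>n. \<Theta> (A n) \<omega>) sums \<Theta> (\<Union>n. A n) \<omega>)) \<and>
     (\<forall>\<AA>. \<AA> \<subseteq> \<RR> \<longrightarrow> disjoint \<AA> \<longrightarrow> prob_space.indep_vars P (\<lambda>_. borel) \<Theta> \<AA>) \<and>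
     (\<forall>A\<in>\<RR>. inf_divisible (distr P borel (\<Theta> A)))"

definition tau :: "real \<Rightarrow> real" where
  "tau x = (if \<bar>x\<bar> \<le> 1 then x else x / \<bar>x\<bar>)"

definition aTheta :: "('r \<Rightarrow> real) \<Rightarrow> ('r \<Rightarrow> real measure) \<Rightarrow> 'r \<Rightarrow> real \<Rightarrow> real" where
  "aTheta a \<kappa> r \<alpha> = \<alpha> * a r + (\<integral>\<beta>. tau (\<alpha> * \<beta>) - \<alpha> * tau \<beta> \<partial>(\<kappa> r))"

definition S_det :: "'r set set \<Rightarrow> ('r \<Rightarrow> real) set" where
  "S_det \<RR> = {f. \<exists>(n::nat) (\<beta>::nat \<Rightarrow> real) (A::nat \<Rightarrow> 'r set).
      (\<forall>k<n. A k \<in> \<RR>) \<and> disjoint_family_on A {..<n} \<and>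
      f = (\<lambda>r. \<Sum>k<n. \<beta> k * indicator (A k) r)}"

definition S1_det :: "'r set set \<Rightarrow> ('r \<Rightarrow> real) set" where
  "S1_det \<RR> = {f. \<exists>(n::nat) (\<beta>::nat \<Rightarrow> real) (A::nat \<Rightarrow> 'r set).
      (\<forall>k<n. A k \<in> \<RR> \<and> \<bar>\<beta> k\<bar> \<le> 1) \<and> disjoint_family_on A {..<n} \<and>
      f = (\<lambda>r. \<Sum>k<n. \<beta> k * indicator (A k) r)}"

end

theory Submission
  imports Defs
begin

(* For |alpha| <= C the integrand is bounded by C^3 min(beta^2, 1), so on the support U of f the
   family r |-> a_Theta(r, beta f(r)), |beta| <= 1, is dominated by an integrable function: kappa
   integrates min(beta^2, 1) against chi over U by the Levy condition on lambda_0, and a is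
   chi-integrable over U.  For fixed r the map alpha |-> a_Theta(r, alpha) need not be continuous,
   but it is continuous on a segment ending at every alpha: either the truncation defects are
   dominated there, or none of them is integrable and the integral term vanishes.  Hence the
   supremum over [-1, 1] equals the supremum over an enumeration q_0, q_1, ... of the rationals in
   [-1, 1].  The maximum over q_0, ..., q_m is realised by a simple function gamma_m in S1_det that
   picks on each piece the first maximising index, and dominated convergence gives
   int a_Theta(r, gamma_m f) -> int sup_beta a_Theta(r, beta f); the reverse inequality holds
   pointwise. *)

definition tau_defect :: "real \<Rightarrow> real \<Rightarrow> real" where
  "tau_defect \<alpha> x = tau (\<alpha> * x) - \<alpha> * tau x"

lemma tau_eq_divide_max: "tau x = x / max 1 \<bar>x\<bar>"
  by (auto simp: tau_def max_def)

lemma continuous_on_tau: "continuous_on A tau"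
  unfolding tau_eq_divide_max[abs_def] by (intro continuous_intros) auto

lemma tau_minus: "tau (- x) = - tau x"
  by (auto simp: tau_def)

lemma tau_nonneg: "0 \<le> x \<Longrightarrow> tau x = min x 1"
  by (auto simp: tau_def)

lemma borel_measurable_tau_defect: "tau_defect \<alpha> \<in> borel_measurable borel"
proof (rule borel_measurable_continuous_onI)
  show "continuous_on UNIV (tau_defect \<alpha>)"
    unfolding tau_defect_def
    by (intro continuous_intros) (auto intro: continuous_on_compose2[OF continuous_on_tau])
qed

lemma tau_defect_0 [simp]: "tau_defect 0 x = 0"
  by (simp add: tau_defect_def tau_def)

lemma abs_tau_defect_abs: "\<bar>tau_defect \<alpha> x\<bar> = \<bar>tau_defect \<bar>\<alpha>\<bar> \<bar>x\<bar>\<bar>"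
proof -
  have "\<bar>tau_defect (- \<alpha>) x\<bar> = \<bar>tau_defect \<alpha> x\<bar>" "\<bar>tau_defect \<alpha> (- x)\<bar> = \<bar>tau_defect \<alpha> x\<bar>" for \<alpha> x
    by (simp_all add: tau_defect_def tau_minus)
  then show ?thesis
    by (cases "0 \<le> \<alpha>"; cases "0 \<le> x") (simp_all add: abs_if)
qed

lemma abs_tau_defect_eq_small:
  assumes "\<bar>\<alpha>\<bar> \<le> 1"
  shows "\<bar>tau_defect \<alpha> x\<bar> = (if \<bar>x\<bar> \<le> 1 then 0 else min (\<bar>\<alpha>\<bar> * (\<bar>x\<bar> - 1)) (1 - \<bar>\<alpha>\<bar>))"
proof -
  define s y where "s = \<bar>\<alpha>\<bar>" and "y = \<bar>x\<bar>"
  have s: "0 \<le> s" "s \<le> 1" and y: "0 \<le> y" using assms by (auto simp: s_def y_def)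
  have "s * y \<le> 1" if "y \<le> 1" using s y that by (simp add: mult_le_one)
  moreover have "s \<le> s * y" if "1 < y" using s that mult_left_mono[of 1 y s] by simp
  ultimately have "\<bar>tau_defect s y\<bar> = (if y \<le> 1 then 0 else min (s * (y - 1)) (1 - s))"
    using s y by (auto simp: tau_defect_def tau_nonneg mult_nonneg_nonneg min_def algebra_simps)
  with abs_tau_defect_abs[of \<alpha> x] show ?thesis by (simp only: s_def y_def)
qed

lemma abs_tau_defect_eq_large:
  assumes "1 \<le> \<bar>\<alpha>\<bar>"
  shows "\<bar>tau_defect \<alpha> x\<bar> = (if \<bar>\<alpha> * x\<bar> \<le> 1 then 0 else min (\<bar>\<alpha> * x\<bar> - 1) (\<bar>\<alpha>\<bar> - 1))"
proof -
  define s y where "s = \<bar>\<alpha>\<bar>" and "y = \<bar>x\<bar>"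
  have s: "1 \<le> s" and y: "0 \<le> y" using assms by (auto simp: s_def y_def)
  have "y \<le> s * y" using s y mult_right_mono[of 1 s y] by simp
  moreover have "s * y \<le> s" if "y \<le> 1" using s y that mult_left_mono[of y 1 s] by simp
  moreover have "s \<le> s * y" if "1 < y" using s that mult_left_mono[of 1 y s] by simp
  ultimately have "\<bar>tau_defect s y\<bar> = (if s * y \<le> 1 then 0 else min (s * y - 1) (s - 1))"
    using s y by (auto simp: tau_defect_def tau_nonneg min_def algebra_simps)
  with abs_tau_defect_abs[of \<alpha> x] show ?thesis by (simp only: s_def y_def abs_mult)
qed

lemma tau_defect_abs_eq_1: "\<bar>\<alpha>\<bar> = 1 \<Longrightarrow> tau_defect \<alpha> x = 0"
  using abs_tau_defect_eq_large[of \<alpha> x] by (auto simp: abs_mult split: if_splits)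

lemma abs_tau_defect_le_half:
  assumes "\<bar>\<alpha>\<bar> \<le> 1"
  shows "\<bar>tau_defect \<alpha> x\<bar> \<le> 2 * \<bar>tau_defect (1/2) x\<bar>"
proof (cases "\<bar>x\<bar> \<le> 1")
  case False
  have "\<bar>tau_defect \<alpha> x\<bar> = min (\<bar>\<alpha>\<bar> * (\<bar>x\<bar> - 1)) (1 - \<bar>\<alpha>\<bar>)"
    using abs_tau_defect_eq_small[OF assms] False by simp
  also have "\<dots> \<le> min (\<bar>x\<bar> - 1) 1"
    using assms False by (intro min.mono) (simp_all add: mult_left_le_one_le)
  also have "\<dots> = 2 * \<bar>tau_defect (1/2) x\<bar>"
    using abs_tau_defect_eq_small[of "1/2" x] False by (simp add: min_def)
  finally show ?thesis .
qed (use abs_tau_defect_eq_small[OF assms] in simp)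

lemma abs_tau_defect_half_le:
  assumes "0 < \<bar>\<alpha>\<bar>" "\<bar>\<alpha>\<bar> < 1"
  shows "\<bar>tau_defect (1/2) x\<bar> \<le> 1 / (2 * \<bar>\<alpha>\<bar> * (1 - \<bar>\<alpha>\<bar>)) * \<bar>tau_defect \<alpha> x\<bar>"
proof (cases "\<bar>x\<bar> \<le> 1")
  case False
  define K where "K = 1 / (2 * \<bar>\<alpha>\<bar> * (1 - \<bar>\<alpha>\<bar>))"
  have "1/2 \<le> 1 / (2 * (1 - \<bar>\<alpha>\<bar>))" "1/2 \<le> 1 / (2 * \<bar>\<alpha>\<bar>)" using assms by (simp_all add: divide_simps)
  moreover have "K * \<bar>\<alpha>\<bar> = 1 / (2 * (1 - \<bar>\<alpha>\<bar>))" "K * (1 - \<bar>\<alpha>\<bar>) = 1 / (2 * \<bar>\<alpha>\<bar>)"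
    using assms by (simp_all add: K_def)
  ultimately have K: "1/2 \<le> K * \<bar>\<alpha>\<bar>" "1/2 \<le> K * (1 - \<bar>\<alpha>\<bar>)" by simp_all
  have "1/2 * (\<bar>x\<bar> - 1) \<le> K * \<bar>\<alpha>\<bar> * (\<bar>x\<bar> - 1)" using K(1) False by (intro mult_right_mono) auto
  have "\<bar>tau_defect (1/2) x\<bar> = min (1/2 * (\<bar>x\<bar> - 1)) (1/2)"
    using abs_tau_defect_eq_small[of "1/2" x] False by simp
  also have "\<dots> \<le> min (K * (\<bar>\<alpha>\<bar> * (\<bar>x\<bar> - 1))) (K * (1 - \<bar>\<alpha>\<bar>))"
    using \<open>1/2 * (\<bar>x\<bar> - 1) \<le> K * \<bar>\<alpha>\<bar> * (\<bar>x\<bar> - 1)\<close> K(2) by (intro min.mono) (simp_all add: mult.assoc)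
  also have "\<dots> = K * min (\<bar>\<alpha>\<bar> * (\<bar>x\<bar> - 1)) (1 - \<bar>\<alpha>\<bar>)"
    using assms by (simp add: K_def min_mult_distrib_left)
  also have "\<dots> = K * \<bar>tau_defect \<alpha> x\<bar>"
    using abs_tau_defect_eq_small[of \<alpha> x] assms False by simp
  finally show ?thesis unfolding K_def .
qed (use abs_tau_defect_eq_small[of "1/2" x] assms in \<open>auto intro!: divide_nonneg_pos\<close>)

lemma abs_tau_defect_mono:
  assumes "1 \<le> \<bar>\<alpha>\<bar>" "\<bar>\<alpha>\<bar> \<le> \<bar>\<alpha>'\<bar>"
  shows "\<bar>tau_defect \<alpha> x\<bar> \<le> \<bar>tau_defect \<alpha>' x\<bar>"
proof (cases "\<bar>\<alpha> * x\<bar> \<le> 1")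
  case False
  have ax: "\<bar>\<alpha> * x\<bar> \<le> \<bar>\<alpha>' * x\<bar>" using assms by (simp add: abs_mult mult_right_mono)
  have "\<bar>tau_defect \<alpha> x\<bar> = min (\<bar>\<alpha> * x\<bar> - 1) (\<bar>\<alpha>\<bar> - 1)"
    using abs_tau_defect_eq_large[OF assms(1)] False by simp
  also have "\<dots> \<le> min (\<bar>\<alpha>' * x\<bar> - 1) (\<bar>\<alpha>'\<bar> - 1)" using ax assms by (intro min.mono) simp_all
  also have "\<dots> = \<bar>tau_defect \<alpha>' x\<bar>" using abs_tau_defect_eq_large[of \<alpha>' x] assms ax False by simp
  finally show ?thesis .
qed (use abs_tau_defect_eq_large[OF assms(1)] in simp)

lemma abs_tau_defect_le_cube:
  assumes "\<bar>\<alpha>\<bar> \<le> M" "1 \<le> M"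
  shows "\<bar>tau_defect \<alpha> x\<bar> \<le> M^3 * min (x\<^sup>2) 1"
proof -
  have M3: "1 \<le> M^3" "M \<le> M^3"
    using assms(2) power_increasing[of 1 3 M] by (simp_all add: one_le_power)
  have big: "min (x\<^sup>2) 1 = 1" if "1 \<le> \<bar>x\<bar>"
    using one_le_power[OF that, of 2] by (simp add: min_def)
  have nonneg: "0 \<le> M^3 * min (x\<^sup>2) 1" using assms(2) by (simp add: mult_nonneg_nonneg)
  show ?thesis
  proof (cases "\<bar>\<alpha>\<bar> \<le> 1")
    case True
    have "\<bar>tau_defect \<alpha> x\<bar> \<le> (if \<bar>x\<bar> \<le> 1 then 0 else 1)"
      using abs_tau_defect_eq_small[OF True, of x] by (auto simp: min_le_iff_disj)
    then show ?thesis using big M3 nonneg by (cases "\<bar>x\<bar> \<le> 1") auto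
  next
    case False
    have td_le: "\<bar>tau_defect \<alpha> x\<bar> \<le> (if \<bar>\<alpha> * x\<bar> \<le> 1 then 0 else M)"
      using abs_tau_defect_eq_large[of \<alpha> x] False assms(1) by (auto simp: min_le_iff_disj)
    have "M \<le> M^3 * min (x\<^sup>2) 1" if "1 < \<bar>\<alpha> * x\<bar>"
    proof (cases "\<bar>x\<bar> < 1")
      case True
      have "1 \<le> M * \<bar>x\<bar>" using that assms mult_right_mono[of "\<bar>\<alpha>\<bar>" M "\<bar>x\<bar>"] by (simp add: abs_mult)
      then have "1 \<le> M\<^sup>2 * x\<^sup>2" by (metis one_le_power power_mult_distrib power2_abs)
      then have "M \<le> M * (M\<^sup>2 * x\<^sup>2)" using assms(2) by simp
      moreover have "min (x\<^sup>2) 1 = x\<^sup>2" using True by (simp add: abs_square_le_1 min_def)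
      ultimately show ?thesis by (simp add: power3_eq_cube power2_eq_square mult.assoc)
    qed (use big M3 in simp)
    then show ?thesis using td_le nonneg by (cases "\<bar>\<alpha> * x\<bar> \<le> 1") auto
  qed
qed

definition levy_drift :: "real measure \<Rightarrow> real \<Rightarrow> real \<Rightarrow> real" where
  "levy_drift \<mu> c \<alpha> = \<alpha> * c + (\<integral>x. tau_defect \<alpha> x \<partial>\<mu>)"

lemma aTheta_eq_levy_drift: "aTheta a \<kappa> r \<alpha> = levy_drift (\<kappa> r) (a r) \<alpha>"
  by (simp add: aTheta_def levy_drift_def tau_defect_def)

lemma levy_drift_0 [simp]: "levy_drift \<mu> c 0 = 0"
  by (simp add: levy_drift_def)

lemma integrable_tau_defect_dominated:
  assumes "sets \<mu> = sets borel" "integrable \<mu> g" "\<And>x. \<bar>tau_defect \<alpha> x\<bar> \<le> g x"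
  shows "integrable \<mu> (tau_defect \<alpha>)"
proof (rule Bochner_Integration.integrable_bound[OF assms(2)])
  show "tau_defect \<alpha> \<in> borel_measurable \<mu>"
    using borel_measurable_tau_defect by (simp add: measurable_cong_sets[OF assms(1) refl])
  have "\<bar>tau_defect \<alpha> x\<bar> \<le> \<bar>g x\<bar>" for x
    by (rule order_trans[OF assms(3) abs_ge_self])
  then show "AE x in \<mu>. norm (tau_defect \<alpha> x) \<le> norm (g x)"
    by (intro AE_I2) simp
qed

lemma integrable_tau_defect_iff_half:
  assumes "sets \<mu> = sets borel" "0 < \<bar>\<alpha>\<bar>" "\<bar>\<alpha>\<bar> < 1"
  shows "integrable \<mu> (tau_defect \<alpha>) \<longleftrightarrow> integrable \<mu> (tau_defect (1/2))"
proof
  assume "integrable \<mu> (tau_defect \<alpha>)"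
  then have "integrable \<mu> (\<lambda>x. 1 / (2 * \<bar>\<alpha>\<bar> * (1 - \<bar>\<alpha>\<bar>)) * \<bar>tau_defect \<alpha> x\<bar>)"
    by (intro integrable_mult_right integrable_abs)
  then show "integrable \<mu> (tau_defect (1/2))"
    by (rule integrable_tau_defect_dominated[OF assms(1)]) (rule abs_tau_defect_half_le[OF assms(2,3)])
next
  assume "integrable \<mu> (tau_defect (1/2))"
  then have "integrable \<mu> (\<lambda>x. 2 * \<bar>tau_defect (1/2) x\<bar>)"
    by (intro integrable_mult_right integrable_abs)
  then show "integrable \<mu> (tau_defect \<alpha>)"
    by (rule integrable_tau_defect_dominated[OF assms(1)]) (use abs_tau_defect_le_half assms(3) in simp)
qed

lemma integrable_tau_defect_mono:
  assumes "sets \<mu> = sets borel" "1 \<le> \<bar>\<alpha>\<bar>" "\<bar>\<alpha>\<bar> \<le> \<bar>\<alpha>'\<bar>" "integrable \<mu> (tau_defect \<alpha>')"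
  shows "integrable \<mu> (tau_defect \<alpha>)"
  using integrable_tau_defect_dominated[OF assms(1) integrable_abs[OF assms(4)]] abs_tau_defect_mono[OF assms(2,3)] .

lemma continuous_on_levy_drift_dominated:
  assumes "sets \<mu> = sets borel" "integrable \<mu> g" "\<And>\<alpha> x. \<alpha> \<in> S \<Longrightarrow> \<bar>tau_defect \<alpha> x\<bar> \<le> g x"
  shows "continuous_on S (levy_drift \<mu> c)"
proof -
  have "continuous_on S (\<lambda>\<alpha>. \<integral>x. tau_defect \<alpha> x \<partial>\<mu>)"
  proof (rule continuous_on_sequentiallyI)
    fix \<alpha>s \<alpha> assume \<alpha>s: "\<forall>n. \<alpha>s n \<in> S" and "\<alpha>s \<longlonglongrightarrow> \<alpha>"
    show "(\<lambda>n. \<integral>x. tau_defect (\<alpha>s n) x \<partial>\<mu>) \<longlonglongrightarrow> \<integral>x. tau_defect \<alpha> x \<partial>\<mu>"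
    proof (rule integral_dominated_convergence[where w=g])
      have tau: "isCont tau y" for y
        using continuous_on_tau[of UNIV] by (simp add: continuous_on_eq_continuous_at)
      show "AE x in \<mu>. (\<lambda>n. tau_defect (\<alpha>s n) x) \<longlonglongrightarrow> tau_defect \<alpha> x"
        unfolding tau_defect_def
        by (intro AE_I2 tendsto_intros isCont_tendsto_compose[OF tau] \<open>\<alpha>s \<longlonglongrightarrow> \<alpha>\<close>)
      show "AE x in \<mu>. norm (tau_defect (\<alpha>s n) x) \<le> g x" for n
        using assms(3) \<alpha>s by (intro AE_I2) simp
    qed (use assms(1,2) borel_measurable_tau_defect in \<open>simp_all add: measurable_cong_sets[OF assms(1) refl]\<close>)
  qed
  then show ?thesis unfolding levy_drift_def by (intro continuous_intros)
qed

lemma continuous_on_levy_drift_integral_0: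
  assumes "\<And>\<alpha>. \<alpha> \<in> S \<Longrightarrow> (\<integral>x. tau_defect \<alpha> x \<partial>\<mu>) = 0"
  shows "continuous_on S (levy_drift \<mu> c)"
proof (rule continuous_on_eq)
  show "continuous_on S (\<lambda>\<alpha>. \<alpha> * c)" by (intro continuous_intros)
qed (simp add: levy_drift_def assms)

lemma continuous_on_levy_drift_segment_0:
  assumes "sets \<mu> = sets borel" "\<bar>\<alpha>0\<bar> \<le> 1"
  shows "continuous_on (closed_segment \<alpha>0 0) (levy_drift \<mu> c)"
proof -
  have small: "\<bar>\<alpha>\<bar> \<le> 1" if "\<alpha> \<in> closed_segment \<alpha>0 0" for \<alpha>
    using that assms(2) by (auto simp: closed_segment_eq_real_ivl split: if_splits)
  show ?thesis
  proof (cases "integrable \<mu> (tau_defect (1/2))")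
    case True
    show ?thesis
      using abs_tau_defect_le_half small
      by (intro continuous_on_levy_drift_dominated[OF assms(1) integrable_mult_right[OF integrable_abs[OF True]]])
        blast
  next
    case False
    have "(\<integral>x. tau_defect \<alpha> x \<partial>\<mu>) = 0" if "\<bar>\<alpha>\<bar> \<le> 1" for \<alpha>
    proof (cases "\<alpha> = 0 \<or> \<bar>\<alpha>\<bar> = 1")
      case True
      then show ?thesis by (auto simp: tau_defect_abs_eq_1)
    next
      case False
      then show ?thesis using \<open>\<not> integrable \<mu> (tau_defect (1/2))\<close> that
        integrable_tau_defect_iff_half[OF assms(1), of \<alpha>] by (simp add: not_integrable_integral_eq)
    qed
    then show ?thesis using small by (blast intro: continuous_on_levy_drift_integral_0)
  qed
qed

lemma continuous_on_levy_drift_segment_large: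
  assumes "sets \<mu> = sets borel" "1 < \<bar>\<alpha>0\<bar>" "\<bar>\<alpha>0\<bar> < C"
  obtains \<alpha>1 where "\<alpha>1 \<noteq> \<alpha>0" "\<bar>\<alpha>1\<bar> \<le> C" "continuous_on (closed_segment \<alpha>0 \<alpha>1) (levy_drift \<mu> c)"
proof (cases "integrable \<mu> (tau_defect \<alpha>0)")
  case True
  have "1 \<le> \<bar>\<alpha>\<bar> \<and> \<bar>\<alpha>\<bar> \<le> \<bar>\<alpha>0\<bar>" if "\<alpha> \<in> closed_segment \<alpha>0 (sgn \<alpha>0)" for \<alpha>
    using that assms(2) by (auto simp: closed_segment_eq_real_ivl sgn_if split: if_splits)
  then have "continuous_on (closed_segment \<alpha>0 (sgn \<alpha>0)) (levy_drift \<mu> c)"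
    using abs_tau_defect_mono
    by (intro continuous_on_levy_drift_dominated[OF assms(1) integrable_abs[OF True]]) blast
  moreover have "sgn \<alpha>0 \<noteq> \<alpha>0" "\<bar>sgn \<alpha>0\<bar> \<le> C" using assms(2,3) by (auto simp: sgn_if)
  ultimately show ?thesis using that by blast
next
  case False
  have "(\<integral>x. tau_defect \<alpha> x \<partial>\<mu>) = 0" if "\<alpha> \<in> closed_segment \<alpha>0 (sgn \<alpha>0 * C)" for \<alpha>
  proof -
    have "\<bar>\<alpha>0\<bar> \<le> \<bar>\<alpha>\<bar>"
      using that assms(2,3) by (auto simp: closed_segment_eq_real_ivl sgn_if split: if_splits)
    then have "\<not> integrable \<mu> (tau_defect \<alpha>)"
      using False integrable_tau_defect_mono[OF assms(1), of \<alpha>0 \<alpha>] assms(2) by auto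
    then show ?thesis by (rule not_integrable_integral_eq)
  qed
  then have "continuous_on (closed_segment \<alpha>0 (sgn \<alpha>0 * C)) (levy_drift \<mu> c)"
    by (rule continuous_on_levy_drift_integral_0)
  moreover have "sgn \<alpha>0 * C \<noteq> \<alpha>0" "\<bar>sgn \<alpha>0 * C\<bar> \<le> C" using assms(2,3) by (auto simp: sgn_if)
  ultimately show ?thesis using that by blast
qed

lemma abs_levy_drift_le:
  assumes "sets \<mu> = sets borel" "(\<integral>\<^sup>+x. ennreal (min (x\<^sup>2) 1) \<partial>\<mu>) < \<infinity>" "\<bar>\<alpha>\<bar> \<le> M" "1 \<le> M"
  shows "\<bar>levy_drift \<mu> c \<alpha>\<bar> \<le> M * \<bar>c\<bar> + M^3 * enn2real (\<integral>\<^sup>+x. ennreal (min (x\<^sup>2) 1) \<partial>\<mu>)"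
proof -
  have m: "(\<lambda>x. min (x\<^sup>2) 1) \<in> borel_measurable \<mu>"
    by (simp add: measurable_cong_sets[OF assms(1) refl])
  have int: "integrable \<mu> (\<lambda>x. min (x\<^sup>2) 1)"
    using assms(2) m by (simp add: integrable_iff_bounded)
  have bound: "\<bar>tau_defect \<alpha> x\<bar> \<le> M^3 * min (x\<^sup>2) 1" for x
    using abs_tau_defect_le_cube[OF assms(3,4)] .
  have "\<bar>\<integral>x. tau_defect \<alpha> x \<partial>\<mu>\<bar> \<le> (\<integral>x. M^3 * min (x\<^sup>2) 1 \<partial>\<mu>)"
    using integrable_tau_defect_dominated[OF assms(1) integrable_mult_right[OF int] bound] bound int
    by (intro integral_abs_bound_integral) auto
  also have "\<dots> = M^3 * enn2real (\<integral>\<^sup>+x. ennreal (min (x\<^sup>2) 1) \<partial>\<mu>)"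
    using m by (simp add: integral_eq_nn_integral)
  finally have "\<bar>\<integral>x. tau_defect \<alpha> x \<partial>\<mu>\<bar> \<le> M^3 * enn2real (\<integral>\<^sup>+x. ennreal (min (x\<^sup>2) 1) \<partial>\<mu>)" .
  moreover have "\<bar>\<alpha> * c\<bar> \<le> M * \<bar>c\<bar>" unfolding abs_mult using assms(3) by (rule mult_right_mono) simp
  ultimately show ?thesis
    unfolding levy_drift_def using abs_triangle_ineq[of "\<alpha> * c" "\<integral>x. tau_defect \<alpha> x \<partial>\<mu>"] by linarith
qed

lemma Sup_real_unbounded:
  fixes X :: "real set"
  assumes "\<not> bdd_above X"
  shows "Sup X = Sup (UNIV :: real set)"
proof -
  have "(\<lambda>z. \<forall>x\<in>X. x \<le> z) = (\<lambda>z. \<forall>x\<in>UNIV. x \<le> z)"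
  proof (rule ext)
    fix z :: real
    have "\<not> (\<forall>x\<in>X. x \<le> z)" using assms by (auto intro: bdd_aboveI)
    moreover have "\<not> (\<forall>x\<in>UNIV. x \<le> z)"
    proof
      assume "\<forall>x\<in>UNIV. x \<le> z"
      then have "z + 1 \<le> z" by (rule bspec) (rule UNIV_I)
      then show False by linarith
    qed
    ultimately show "(\<forall>x\<in>X. x \<le> z) = (\<forall>x\<in>UNIV. x \<le> z)" by blast
  qed
  then show ?thesis unfolding Sup_real_def by (rule arg_cong)
qed

lemma Sup_eq_Sup_approx:
  fixes X Y :: "real set"
  assumes "Y \<subseteq> X" "X \<noteq> {}" "\<And>x e. x \<in> X \<Longrightarrow> 0 < e \<Longrightarrow> \<exists>y\<in>Y. x - e < y"
  shows "Sup Y = Sup X"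
proof (cases "bdd_above Y")
  case True
  obtain x where "x \<in> X" using assms(2) by blast
  with assms(3)[of x 1] have "Y \<noteq> {}" by auto
  have le: "x \<le> Sup Y" if x: "x \<in> X" for x
  proof (rule ccontr)
    assume "\<not> x \<le> Sup Y"
    then obtain y where "y \<in> Y" "Sup Y < y" using assms(3)[OF x, of "x - Sup Y"] by auto
    then show False using cSup_upper[OF _ True] by (simp add: not_le[symmetric])
  qed
  then have "bdd_above X" by (rule bdd_aboveI)
  show ?thesis
  proof (rule antisym)
    show "Sup Y \<le> Sup X" by (rule cSup_subset_mono[OF \<open>Y \<noteq> {}\<close> \<open>bdd_above X\<close> assms(1)])
    show "Sup X \<le> Sup Y" by (rule cSup_least[OF assms(2) le])
  qed
next
  case False
  then have "\<not> bdd_above X" using assms(1) by (metis bdd_above_mono)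
  with False show ?thesis by (simp add: Sup_real_unbounded)
qed
lemma Rats_approx_continuous_on_segment:
  fixes h :: "real \<Rightarrow> real"
  assumes "continuous_on (closed_segment b b') h" "b' \<noteq> b" "0 < e"
  obtains q where "q \<in> \<rat>" "q \<in> closed_segment b b'" "h b - e < h q"
proof -
  obtain d where d: "0 < d" "\<And>x. x \<in> closed_segment b b' \<Longrightarrow> dist x b < d \<Longrightarrow> dist (h x) (h b) < e"
    using assms(1,3) ends_in_segment(1) unfolding continuous_on_iff by metis
  define d' where "d' = min \<bar>b' - b\<bar> d"
  have d': "0 < d'" "d' \<le> \<bar>b' - b\<bar>" "d' \<le> d" using d assms(2) by (auto simp: d'_def)
  obtain q where q: "q \<in> \<rat>" "q \<in> closed_segment b b'" "\<bar>q - b\<bar> < d"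
  proof (cases "b < b'")
    case True
    obtain q where "q \<in> \<rat>" "b < q" "q < b + d'" using Rats_dense_in_real[of b "b + d'"] d' by auto
    then show ?thesis using that[of q] d' True by (auto simp: closed_segment_eq_real_ivl)
  next
    case False
    obtain q where "q \<in> \<rat>" "b - d' < q" "q < b" using Rats_dense_in_real[of "b - d'" b] d' by auto
    then show ?thesis using that[of q] d' False by (auto simp: closed_segment_eq_real_ivl)
  qed
  then have "dist (h q) (h b) < e" using d(2) by (simp add: dist_real_def)
  then show ?thesis using that q by (simp add: dist_real_def)
qed

lemma SUP_Rats_eq_if_one_sided_continuous:
  fixes h :: "real \<Rightarrow> real"
  assumes "convex S"
    and "\<And>b. b \<in> S - \<rat> \<Longrightarrow> \<exists>b'\<in>S. b' \<noteq> b \<and> continuous_on (closed_segment b b') h"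
  shows "(SUP q\<in>\<rat> \<inter> S. h q) = (SUP b\<in>S. h b)"
proof (cases "S = {}")
  case False
  show ?thesis
  proof (rule Sup_eq_Sup_approx)
    fix x e assume "x \<in> h ` S" "0 < (e::real)"
    then obtain b where b: "b \<in> S" "x = h b" by auto
    show "\<exists>y\<in>h ` (\<rat> \<inter> S). x - e < y"
    proof (cases "b \<in> \<rat>")
      case True
      then show ?thesis using b \<open>0 < e\<close> by (intro bexI[of _ "h b"]) auto
    next
      case False
      then obtain b' where "b' \<in> S" "b' \<noteq> b" "continuous_on (closed_segment b b') h"
        using assms(2) b by blast
      moreover from this obtain q where "q \<in> \<rat>" "q \<in> closed_segment b b'" "h b - e < h q"
        using Rats_approx_continuous_on_segment \<open>0 < e\<close> by metis
      ultimately show ?thesis using closed_segment_subset[OF b(1) _ assms(1)] b by blast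
    qed
  qed (use False in auto)
qed simp

lemma SUP_levy_drift_Rats:
  fixes y :: real
  assumes "sets \<mu> = sets borel"
  shows "(SUP q\<in>\<rat> \<inter> {-1..1}. levy_drift \<mu> c (q * y)) = (SUP b\<in>{-1..1}. levy_drift \<mu> c (b * y))"
proof (rule SUP_Rats_eq_if_one_sided_continuous)
  fix b :: real assume b: "b \<in> {-1..1} - \<rat>"
  then have "b \<noteq> 0" "b \<noteq> 1" "b \<noteq> -1" by auto
  with b have "\<bar>b\<bar> < 1" by auto
  show "\<exists>b'\<in>{-1..1}. b' \<noteq> b \<and> continuous_on (closed_segment b b') (\<lambda>b. levy_drift \<mu> c (b * y))"
  proof (cases "y = 0")
    case True
    then show ?thesis using \<open>b \<noteq> 0\<close> by (intro bexI[of _ 0]) auto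
  next
    case False
    have "b * y \<noteq> 0" "\<bar>b * y\<bar> < \<bar>y\<bar>" using \<open>b \<noteq> 0\<close> \<open>\<bar>b\<bar> < 1\<close> False by (auto simp: abs_mult)
    obtain \<alpha>1 where \<alpha>1: "\<alpha>1 \<noteq> b * y" "\<bar>\<alpha>1\<bar> \<le> \<bar>y\<bar>"
      and cont: "continuous_on (closed_segment (b * y) \<alpha>1) (levy_drift \<mu> c)"
    proof (cases "\<bar>b * y\<bar> \<le> 1")
      case True
      then show ?thesis
        using that[of 0] \<open>b * y \<noteq> 0\<close> continuous_on_levy_drift_segment_0[OF assms] by simp
    next
      case False
      show ?thesis
        by (rule continuous_on_levy_drift_segment_large[OF assms _ \<open>\<bar>b * y\<bar> < \<bar>y\<bar>\<close>, of c])
          (use False that in auto)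
    qed
    define b' where "b' = \<alpha>1 / y"
    have b'y: "b' * y = \<alpha>1" using False by (simp add: b'_def)
    have "\<bar>b'\<bar> \<le> 1" unfolding b'_def abs_divide using \<alpha>1(2) False by (simp add: divide_le_eq_1)
    then have "b' \<in> {-1..1}" by (auto simp: abs_le_iff)
    moreover have "b' \<noteq> b" using b'y \<alpha>1(1) by auto
    moreover have "continuous_on (closed_segment b b') (\<lambda>b. levy_drift \<mu> c (b * y))"
    proof (rule continuous_on_compose2[OF cont])
      show "(\<lambda>b. b * y) ` closed_segment b b' \<subseteq> closed_segment (b * y) \<alpha>1"
        using closed_segment_linear_image[OF bounded_linear.linear[OF bounded_linear_mult_left[of y]], of b b']
        by (simp add: b'y)
    qed (intro continuous_intros)
    ultimately show ?thesis by blast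
  qed
qed simp

lemma borel_measurable_kernel_nn_integral:
  fixes \<kappa> :: "'a \<Rightarrow> 'b measure" and u :: "'b \<Rightarrow> ennreal"
  assumes sets_\<kappa>: "\<And>r. sets (\<kappa> r) = sets N"
    and measurable_\<kappa>: "\<And>B. B \<in> sets N \<Longrightarrow> (\<lambda>r. emeasure (\<kappa> r) B) \<in> borel_measurable M"
    and u: "u \<in> borel_measurable N"
  shows "(\<lambda>r. \<integral>\<^sup>+x. u x \<partial>\<kappa> r) \<in> borel_measurable M"
  using u
proof (induction rule: borel_measurable_induct)
  case (cong f g)
  have "(\<integral>\<^sup>+x. f x \<partial>\<kappa> r) = (\<integral>\<^sup>+x. g x \<partial>\<kappa> r)" for r
    using cong(3) sets_eq_imp_space_eq[OF sets_\<kappa>] by (intro nn_integral_cong) simp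
  then show ?case using cong(4) by simp
next
  case (set A)
  then show ?case using measurable_\<kappa> by (simp add: sets_\<kappa>)
next
  case (mult u c)
  then show ?case by (simp add: nn_integral_cmult measurable_cong_sets[OF sets_\<kappa> refl])
next
  case (add u v)
  then show ?case by (simp add: nn_integral_add measurable_cong_sets[OF sets_\<kappa> refl])
next
  case (seq U)
  have "(\<integral>\<^sup>+x. (SUP i. U i) x \<partial>\<kappa> r) = (SUP i. \<integral>\<^sup>+x. U i x \<partial>\<kappa> r)" for r
    unfolding SUP_apply using seq
    by (intro nn_integral_monotone_convergence_SUP) (simp_all add: measurable_cong_sets[OF sets_\<kappa> refl])
  then show ?case using seq by simp
qed

lemma borel_measurable_kernel_integral:
  fixes \<kappa> :: "'a \<Rightarrow> 'b measure" and u :: "'b \<Rightarrow> real"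
  assumes sets_\<kappa>: "\<And>r. sets (\<kappa> r) = sets N"
    and measurable_\<kappa>: "\<And>B. B \<in> sets N \<Longrightarrow> (\<lambda>r. emeasure (\<kappa> r) B) \<in> borel_measurable M"
    and u: "u \<in> borel_measurable N"
  shows "(\<lambda>r. \<integral>x. u x \<partial>\<kappa> r) \<in> borel_measurable M"
proof -
  note nn_meas = borel_measurable_kernel_nn_integral[OF sets_\<kappa> measurable_\<kappa>]
  have [measurable]: "(\<lambda>r. \<integral>\<^sup>+x. ennreal \<bar>u x\<bar> \<partial>\<kappa> r) \<in> borel_measurable M"
    by (intro nn_meas measurable_compose[OF borel_measurable_abs[OF u] measurable_ennreal])
  have [measurable]: "(\<lambda>r. \<integral>\<^sup>+x. ennreal (u x) \<partial>\<kappa> r) \<in> borel_measurable M"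
    by (intro nn_meas measurable_compose[OF u measurable_ennreal])
  have [measurable]: "(\<lambda>r. \<integral>\<^sup>+x. ennreal (- u x) \<partial>\<kappa> r) \<in> borel_measurable M"
    by (intro nn_meas measurable_compose[OF borel_measurable_uminus[OF u] measurable_ennreal])
  have "(\<integral>x. u x \<partial>\<kappa> r) = (if (\<integral>\<^sup>+x. ennreal \<bar>u x\<bar> \<partial>\<kappa> r) < \<infinity>
      then enn2real (\<integral>\<^sup>+x. ennreal (u x) \<partial>\<kappa> r) - enn2real (\<integral>\<^sup>+x. ennreal (- u x) \<partial>\<kappa> r) else 0)" for r
    using u integrable_iff_bounded[of "\<kappa> r" u]
    by (auto simp: real_lebesgue_integral_def not_integrable_integral_eq measurable_cong_sets[OF sets_\<kappa> refl])
  then show ?thesis by simp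
qed

lemma nn_integral_kernel_disintegration:
  fixes \<nu> :: "('a \<times> 'b) measure" and M :: "'a measure" and \<kappa> :: "'a \<Rightarrow> 'b measure"
  assumes sets_\<nu>: "sets \<nu> = sets (S \<Otimes>\<^sub>M N)" and sets_M: "sets M = sets S"
    and sets_\<kappa>: "\<And>r. sets (\<kappa> r) = sets N"
    and measurable_\<kappa>: "\<And>B. B \<in> sets N \<Longrightarrow> (\<lambda>r. emeasure (\<kappa> r) B) \<in> borel_measurable M"
    and disintegration: "\<And>X. X \<in> sets \<nu> \<Longrightarrow> emeasure \<nu> X = (\<integral>\<^sup>+r. emeasure (\<kappa> r) (Pair r -` X) \<partial>M)"
    and A: "A \<in> sets S" and u: "u \<in> borel_measurable N"
  shows "(\<integral>\<^sup>+p. indicator (A \<times> space N) p * u (snd p) \<partial>\<nu>) = (\<integral>\<^sup>+r. indicator A r * (\<integral>\<^sup>+x. u x \<partial>\<kappa> r) \<partial>M)"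
  using u
proof (induction rule: borel_measurable_induct)
  note measurable_cong_sets[OF sets_\<kappa> refl, simp] measurable_cong_sets[OF sets_\<nu> refl, simp]
    measurable_cong_sets[OF sets_M refl, simp]
  have [measurable]: "A \<in> sets S" by (rule A)
  have kernel_meas: "(\<lambda>r. indicator A r * (\<integral>\<^sup>+x. g x \<partial>\<kappa> r)) \<in> borel_measurable M"
    if "g \<in> borel_measurable N" for g :: "'b \<Rightarrow> ennreal"
    using borel_measurable_kernel_nn_integral[OF sets_\<kappa> measurable_\<kappa> that] by (simp add: sets_M)
  have joint_meas: "(\<lambda>p. indicator (A \<times> space N) p * g (snd p)) \<in> borel_measurable \<nu>"
    if [measurable]: "g \<in> borel_measurable N" for g :: "'b \<Rightarrow> ennreal"
    by simp
  {
    case (cong f g)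
    have "(\<integral>\<^sup>+p. indicator (A \<times> space N) p * f (snd p) \<partial>\<nu>) = (\<integral>\<^sup>+p. indicator (A \<times> space N) p * g (snd p) \<partial>\<nu>)"
      using cong(3) by (intro nn_integral_cong) (auto simp: indicator_def)
    moreover have "(\<integral>\<^sup>+x. f x \<partial>\<kappa> r) = (\<integral>\<^sup>+x. g x \<partial>\<kappa> r)" for r
      using cong(3) sets_eq_imp_space_eq[OF sets_\<kappa>] by (intro nn_integral_cong) simp
    ultimately show ?case using cong(4) by simp
  next
    case (set B)
    have "A \<times> B \<in> sets \<nu>" using A set sets_\<nu> by auto
    moreover have "indicator (A \<times> space N) p * indicator B (snd p) = (indicator (A \<times> B) p :: ennreal)" for p
      using sets.sets_into_space[OF set] by (auto simp: indicator_def)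
    moreover have "emeasure (\<kappa> r) (Pair r -` (A \<times> B)) = indicator A r * emeasure (\<kappa> r) B" for r
      by (simp add: indicator_def vimage_def)
    ultimately show ?case using set disintegration by (simp add: sets_\<kappa>)
  next
    case (mult u c)
    have "(\<integral>\<^sup>+p. indicator (A \<times> space N) p * (c * u (snd p)) \<partial>\<nu>)
        = c * (\<integral>\<^sup>+p. indicator (A \<times> space N) p * u (snd p) \<partial>\<nu>)"
      using joint_meas[OF mult.hyps(2)] by (subst nn_integral_cmult[symmetric]) (simp_all add: ac_simps)
    also have "\<dots> = c * (\<integral>\<^sup>+r. indicator A r * (\<integral>\<^sup>+x. u x \<partial>\<kappa> r) \<partial>M)"
      by (simp only: mult.IH)
    also have "\<dots> = (\<integral>\<^sup>+r. indicator A r * (\<integral>\<^sup>+x. c * u x \<partial>\<kappa> r) \<partial>M)"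
      using kernel_meas[OF mult.hyps(2)] mult.hyps(2)
      by (subst nn_integral_cmult[symmetric]) (simp_all add: nn_integral_cmult ac_simps)
    finally show ?case .
  next
    case (add u v)
    then show ?case
      using joint_meas[OF add.hyps(1)] joint_meas[OF add.hyps(3)] kernel_meas[OF add.hyps(1)]
        kernel_meas[OF add.hyps(3)]
      by (simp add: nn_integral_add distrib_left)
  next
    case (seq U)
    have inc: "incseq (\<lambda>i p. indicator (A \<times> space N) p * U i (snd p))"
      "incseq (\<lambda>i r. indicator A r * (\<integral>\<^sup>+x. U i x \<partial>\<kappa> r))"
      using seq(3) by (auto simp: incseq_def le_fun_def intro!: mult_left_mono nn_integral_mono)
    have "(\<integral>\<^sup>+x. (SUP i. U i) x \<partial>\<kappa> r) = (SUP i. \<integral>\<^sup>+x. U i x \<partial>\<kappa> r)" for r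
      unfolding SUP_apply using seq by (intro nn_integral_monotone_convergence_SUP) simp_all
    then show ?case
      using seq nn_integral_monotone_convergence_SUP[OF inc(1) joint_meas]
        nn_integral_monotone_convergence_SUP[OF inc(2) kernel_meas]
      by (simp add: SUP_apply SUP_mult_left_ennreal image_comp)
  }
qed

lemma delta_ring_Int_sigma_sets:
  assumes dr: "delta_ring R \<RR>" and A: "A \<in> \<RR>" and E: "E \<in> sigma_sets R \<RR>"
  shows "A \<inter> E \<in> \<RR>"
  using E
proof induction
  case (Basic a)
  have "A \<inter> a = A - (A - a)" by auto
  then show ?case using dr A Basic unfolding delta_ring_def by auto
next
  case Empty
  then show ?case using dr unfolding delta_ring_def by auto
next
  case (Compl a)
  have "A \<subseteq> R" using dr A unfolding delta_ring_def by auto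
  then have "A \<inter> (R - a) = A - (A \<inter> a)" by auto
  then show ?case using dr A Compl unfolding delta_ring_def by auto
next
  case (Union a)
  have "A \<inter> (\<Union>i. a i) = A - (\<Inter>i. A - (A \<inter> a i))" by auto
  moreover have "range (\<lambda>i. A - (A \<inter> a i)) \<subseteq> \<RR>" using dr A Union unfolding delta_ring_def by auto
  ultimately show ?case using dr A unfolding delta_ring_def by metis
qed

lemma delta_ring_UN_lessThan:
  fixes A :: "nat \<Rightarrow> 'a set"
  assumes "delta_ring R \<RR>" "\<And>k. k < n \<Longrightarrow> A k \<in> \<RR>"
  shows "(\<Union>k<n. A k) \<in> \<RR>"
  using assms(2)
proof (induction n)
  case 0
  then show ?case using assms(1) unfolding delta_ring_def by auto
next
  case (Suc n)
  then show ?case using assms(1) unfolding delta_ring_def lessThan_Suc by (simp add: Un_commute)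
qed

lemma sum_indicator_disjoint_family_on:
  fixes b :: "nat \<Rightarrow> real"
  assumes "disjoint_family_on A {..<n}" "k < n" "r \<in> A k"
  shows "(\<Sum>j<n. b j * indicator (A j) r) = b k"
proof -
  have "(\<Sum>j<n. b j * indicator (A j) r) = (\<Sum>j<n. if j = k then b k else 0)"
    using assms by (intro sum.cong) (auto simp: disjoint_family_on_def indicator_def)
  then show ?thesis using assms(2) by simp
qed

lemma sum_indicator_disjoint_family_on_in:
  fixes b :: "nat \<Rightarrow> real"
  assumes "disjoint_family_on A {..<n}"
  shows "(\<Sum>j<n. b j * indicator (A j) r) \<in> insert 0 (b ` {..<n})"
proof (cases "\<exists>k<n. r \<in> A k")
  case True
  then obtain k where k: "k < n" "r \<in> A k" by blast
  then have "(\<Sum>j<n. b j * indicator (A j) r) = b k" by (rule sum_indicator_disjoint_family_on[OF assms])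
  with k(1) show ?thesis by blast
next
  case False
  then have "(\<Sum>j<n. b j * indicator (A j) r) = 0" by (intro sum.neutral) auto
  then show ?thesis by simp
qed

lemma S_detE:
  assumes "f \<in> S_det \<RR>"
  obtains n :: nat and A and \<beta> :: "nat \<Rightarrow> real" where "\<forall>k<n. A k \<in> \<RR>" "disjoint_family_on A {..<n}"
    "f = (\<lambda>r. \<Sum>k<n. \<beta> k * indicator (A k) r)"
  using assms unfolding S_det_def mem_Collect_eq by (elim exE conjE) (rule that; assumption)

lemma S1_detE:
  assumes "f \<in> S1_det \<RR>"
  obtains n :: nat and A and \<beta> :: "nat \<Rightarrow> real" where "\<forall>k<n. A k \<in> \<RR> \<and> \<bar>\<beta> k\<bar> \<le> 1"
    "disjoint_family_on A {..<n}" "f = (\<lambda>r. \<Sum>k<n. \<beta> k * indicator (A k) r)"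
  using assms unfolding S1_det_def mem_Collect_eq by (elim exE conjE) (rule that; assumption)
lemma S_det_finite_range:
  assumes "f \<in> S_det \<RR>"
  shows "finite (range f)"
proof -
  obtain n :: nat and A \<beta> where "\<forall>k<n. A k \<in> \<RR>" and disj: "disjoint_family_on A {..<n}"
    and f: "f = (\<lambda>r. \<Sum>k<n. \<beta> k * indicator (A k) r)"
    using assms by (rule S_detE)
  have "f r \<in> insert 0 (\<beta> ` {..<n})" for r
    unfolding f by (rule sum_indicator_disjoint_family_on_in[OF disj])
  then have "range f \<subseteq> insert 0 (\<beta> ` {..<n})" by blast
  then show ?thesis by (rule finite_subset) simp
qed

lemma S_det_vanishes_outside:
  assumes "delta_ring R \<RR>" "f \<in> S_det \<RR>"
  obtains U where "U \<in> \<RR>" "\<And>r. r \<notin> U \<Longrightarrow> f r = 0"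
proof -
  obtain n :: nat and A \<beta> where A: "\<forall>k<n. A k \<in> \<RR>" and "disjoint_family_on A {..<n}"
    and f: "f = (\<lambda>r. \<Sum>k<n. \<beta> k * indicator (A k) r)"
    using assms(2) by (rule S_detE)
  show ?thesis
  proof (rule that)
    show "(\<Union>k<n. A k) \<in> \<RR>" by (rule delta_ring_UN_lessThan[OF assms(1)]) (use A in blast)
    show "f r = 0" if "r \<notin> (\<Union>k<n. A k)" for r
      using that unfolding f by (intro sum.neutral) auto
  qed
qed

lemma S_det_borel_measurable:
  assumes "\<RR> \<subseteq> sets M" "f \<in> S_det \<RR>"
  shows "f \<in> borel_measurable M"
proof -
  obtain n :: nat and A \<beta> where A: "\<forall>k<n. A k \<in> \<RR>" and "disjoint_family_on A {..<n}"
    and f: "f = (\<lambda>r. \<Sum>k<n. \<beta> k * indicator (A k) r)"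
    using assms(2) by (rule S_detE)
  have "A k \<in> sets M" if "k \<in> {..<n}" for k using that A assms(1) by blast
  then show ?thesis unfolding f
    by (intro borel_measurable_sum borel_measurable_times borel_measurable_const borel_measurable_indicator)
qed

lemma S1_det_abs_le_1:
  assumes "\<gamma> \<in> S1_det \<RR>"
  shows "\<bar>\<gamma> r\<bar> \<le> 1"
proof -
  obtain n :: nat and A \<beta> where \<beta>: "\<forall>k<n. A k \<in> \<RR> \<and> \<bar>\<beta> k\<bar> \<le> 1"
    and disj: "disjoint_family_on A {..<n}" and \<gamma>: "\<gamma> = (\<lambda>r. \<Sum>k<n. \<beta> k * indicator (A k) r)"
    using assms by (rule S1_detE)
  have "\<gamma> r \<in> insert 0 (\<beta> ` {..<n})"
    unfolding \<gamma> by (rule sum_indicator_disjoint_family_on_in[OF disj])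
  then show ?thesis using \<beta> by auto
qed

lemma borel_measurable_finite_range_apply:
  fixes F :: "real \<Rightarrow> 'a \<Rightarrow> real" and u :: "'a \<Rightarrow> real"
  assumes "finite V" "\<And>r. r \<in> space M \<Longrightarrow> u r \<in> V"
    and u: "u \<in> borel_measurable M" and F: "\<And>v. F v \<in> borel_measurable M"
  shows "(\<lambda>r. F (u r) r) \<in> borel_measurable M"
proof -
  have eq: "F (u r) r = (\<Sum>v\<in>V. indicator {r\<in>space M. u r = v} r * F v r)" if "r \<in> space M" for r
  proof -
    have "(\<Sum>v\<in>V. indicator {r\<in>space M. u r = v} r * F v r) = (\<Sum>v\<in>V. if v = u r then F v r else 0)"
      using that by (intro sum.cong) (auto simp: indicator_def)
    then show ?thesis using assms(1,2) that by (simp add: sum.delta')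
  qed
  have sets: "{r\<in>space M. u r = v} \<in> sets M" for v using u by measurable
  have "(\<lambda>r. \<Sum>v\<in>V. indicator {r\<in>space M. u r = v} r * F v r) \<in> borel_measurable M"
    by (intro borel_measurable_sum borel_measurable_times borel_measurable_indicator sets F)
  then show ?thesis by (rule measurable_cong[THEN iffD1, rotated]) (simp add: eq)
qed

lemma bdd_above_range_iff_nat:
  fixes f :: "'a \<Rightarrow> real"
  shows "bdd_above (range f) \<longleftrightarrow> (\<exists>N::nat. \<forall>i. f i \<le> real N)"
proof
  assume "bdd_above (range f)"
  then obtain K where K: "\<And>i. f i \<le> K" by (auto simp: bdd_above_def)
  obtain N :: nat where "K \<le> real N" using real_arch_simple by blast
  then show "\<exists>N::nat. \<forall>i. f i \<le> real N" using K order_trans by blast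
next
  assume "\<exists>N::nat. \<forall>i. f i \<le> real N"
  then show "bdd_above (range f)" by (auto intro: bdd_aboveI2)
qed

lemma borel_measurable_SUP_real:
  fixes F :: "nat \<Rightarrow> 'a \<Rightarrow> real"
  assumes [measurable]: "\<And>i. F i \<in> borel_measurable M"
  shows "(\<lambda>x. SUP i. F i x) \<in> borel_measurable M"
proof -
  define B where "B = {x \<in> space M. \<exists>N::nat. \<forall>i. F i x \<le> real N}"
  have B: "B \<in> sets M" unfolding B_def by measurable
  have "bdd_above (range (\<lambda>i. if x \<in> B then F i x else 0))" for x
    by (cases "x \<in> B") (auto simp: B_def bdd_above_range_iff_nat)
  then have "(\<lambda>x. SUP i. if x \<in> B then F i x else 0) \<in> borel_measurable M"
    using B by (intro borel_measurable_cSUP) simp_all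
  then have "(\<lambda>x. if x \<in> B then SUP i. if x \<in> B then F i x else 0 else Sup (UNIV :: real set))
      \<in> borel_measurable M"
    using B by (intro measurable_If_set) simp_all
  then have meas: "(\<lambda>x. if x \<in> B then SUP i. F i x else Sup (UNIV :: real set)) \<in> borel_measurable M"
    by (simp cong: if_cong)
  have junk: "(SUP i. F i x) = Sup (UNIV :: real set)" if "x \<in> space M" "x \<notin> B" for x
    using that by (intro Sup_real_unbounded) (simp add: B_def bdd_above_range_iff_nat)
  show ?thesis using meas by (rule measurable_cong[THEN iffD1, rotated]) (simp add: junk)
qed
lemma delta_ring_Collect_measurable:
  assumes dr: "delta_ring R \<RR>" and sets_M: "sets M = sets (sigma R \<RR>)" and U: "U \<in> \<RR>"
    and P: "{r \<in> space M. P r} \<in> sets M"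
  shows "{r \<in> U. P r} \<in> \<RR>"
proof -
  have R: "\<RR> \<subseteq> Pow R" using dr by (simp add: delta_ring_def)
  have "U \<subseteq> space M"
    using U R sets_eq_imp_space_eq[OF sets_M] by (auto simp: space_measure_of)
  then have "{r \<in> U. P r} = U \<inter> {r \<in> space M. P r}" by blast
  moreover have "{r \<in> space M. P r} \<in> sigma_sets R \<RR>" using P sets_M R by (simp add: sets_measure_of)
  ultimately show ?thesis using delta_ring_Int_sigma_sets[OF dr U] by simp
qed

lemma disjoint_family_on_first_index:
  fixes P :: "nat \<Rightarrow> 'a \<Rightarrow> bool"
  shows "disjoint_family_on (\<lambda>j. {r \<in> U. P j r \<and> (\<forall>i<j. \<not> P i r)}) S"
proof -
  have less: "{r \<in> U. P i r \<and> (\<forall>k<i. \<not> P k r)} \<inter> {r \<in> U. P j r \<and> (\<forall>k<j. \<not> P k r)} = {}"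
    if "i < j" for i j
    using that by blast
  show ?thesis unfolding disjoint_family_on_def
  proof (intro ballI impI)
    fix i j :: nat assume "i \<noteq> j"
    then consider "i < j" | "j < i" by linarith
    then show "{r \<in> U. P i r \<and> (\<forall>k<i. \<not> P k r)} \<inter> {r \<in> U. P j r \<and> (\<forall>k<j. \<not> P k r)} = {}"
      using less[of i j] less[of j i] by cases (simp_all add: Int_commute)
  qed
qed

lemma S1_det_argmax:
  fixes G :: "nat \<Rightarrow> 'r \<Rightarrow> real" and q :: "nat \<Rightarrow> real"
  assumes dr: "delta_ring R \<RR>" and sets_M: "sets M = sets (sigma R \<RR>)" and U: "U \<in> \<RR>"
    and G: "\<And>j. G j \<in> borel_measurable M" and q: "\<And>j. \<bar>q j\<bar> \<le> 1"
  obtains \<gamma> where "\<gamma> \<in> S1_det \<RR>"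
    "\<And>r. r \<in> U \<Longrightarrow> \<exists>j\<le>m. \<gamma> r = q j \<and> G j r = Max ((\<lambda>i. G i r) ` {..m})"
    "\<And>r. r \<notin> U \<Longrightarrow> \<gamma> r = 0"
proof -
  define Mx where "Mx r = Max ((\<lambda>i. G i r) ` {..m})" for r
  define B where "B j = {r \<in> U. G j r = Mx r \<and> (\<forall>i<j. G i r \<noteq> Mx r)}" for j
  define \<gamma> where "\<gamma> r = (\<Sum>j<Suc m. q j * indicator (B j) r)" for r
  note G[measurable]
  have [measurable]: "Mx \<in> borel_measurable M" unfolding Mx_def by measurable
  have B_in: "B j \<in> \<RR>" for j
    unfolding B_def by (intro delta_ring_Collect_measurable[OF dr sets_M U]) measurable
  have disj: "disjoint_family_on B {..<Suc m}"
    unfolding B_def[abs_def] by (rule disjoint_family_on_first_index)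
  have "\<gamma> \<in> S1_det \<RR>"
    unfolding S1_det_def mem_Collect_eq \<gamma>_def using B_in q disj
    by (intro exI[of _ "Suc m"] exI[of _ q] exI[of _ B] conjI allI impI) simp_all
  moreover have "\<exists>j\<le>m. \<gamma> r = q j \<and> G j r = Mx r" if "r \<in> U" for r
  proof -
    have "Mx r \<in> (\<lambda>i. G i r) ` {..m}" unfolding Mx_def by (intro Max_in) auto
    then obtain i where i: "G i r = Mx r" "i \<le> m" by auto
    define j where "j = (LEAST i. G i r = Mx r)"
    have "G j r = Mx r" unfolding j_def by (rule LeastI[of _ i]) (rule i(1))
    moreover have "j \<le> i" unfolding j_def by (rule Least_le) (rule i(1))
    ultimately have j: "G j r = Mx r" "j \<le> m" using i(2) by simp_all
    have "\<forall>i<j. G i r \<noteq> Mx r" unfolding j_def using not_less_Least by blast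
    with that j(1) have "r \<in> B j" by (simp add: B_def)
    then have "\<gamma> r = q j" unfolding \<gamma>_def using j(2) by (intro sum_indicator_disjoint_family_on[OF disj]) auto
    with j show ?thesis by blast
  qed
  moreover have "\<gamma> r = 0" if "r \<notin> U" for r
    using that unfolding \<gamma>_def B_def by (intro sum.neutral) auto
  ultimately show ?thesis unfolding Mx_def by (rule that)
qed

lemma
  assumes U: "U \<in> sets M" and L: "L \<in> borel_measurable M" and fin: "(\<integral>\<^sup>+r. indicator U r * L r \<partial>M) < \<infinity>"
  shows integrable_indicator_enn2real: "integrable M (\<lambda>r. indicator U r * enn2real (L r))"
    and AE_indicator_finite: "AE r in M. r \<in> U \<longrightarrow> L r < \<infinity>"
proof -
  show "integrable M (\<lambda>r. indicator U r * enn2real (L r))"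
  proof (rule integrableI_bounded)
    have "(\<integral>\<^sup>+r. ennreal (norm (indicator U r * enn2real (L r))) \<partial>M) \<le> (\<integral>\<^sup>+r. indicator U r * L r \<partial>M)"
      by (intro nn_integral_mono) (auto simp: indicator_def ennreal_enn2real_if)
    then show "(\<integral>\<^sup>+r. ennreal (norm (indicator U r * enn2real (L r))) \<partial>M) < \<infinity>"
      using fin by (rule le_less_trans)
  qed (use L U in measurable)
  have "AE r in M. indicator U r * L r \<noteq> \<infinity>"
    using L U fin by (intro nn_integral_noteq_infinite) auto
  then show "AE r in M. r \<in> U \<longrightarrow> L r < \<infinity>"
    by eventually_elim (auto simp: indicator_def top.not_eq_extremum)
qed

lemma Max_prefix_tendsto_SUP:
  fixes f :: "nat \<Rightarrow> real"
  assumes "bdd_above (range f)"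
  shows "(\<lambda>m. Max (f ` {..m})) \<longlonglongrightarrow> (SUP j. f j)"
proof -
  have le: "Max (f ` {..m}) \<le> (SUP j. f j)" for m
    using assms by (intro Max.boundedI) (auto intro: cSUP_upper)
  have "incseq (\<lambda>m. Max (f ` {..m}))"
    by (intro monoI Max_mono) auto
  moreover have bdd: "bdd_above (range (\<lambda>m. Max (f ` {..m})))" using le by (rule bdd_aboveI2)
  ultimately have "(\<lambda>m. Max (f ` {..m})) \<longlonglongrightarrow> (SUP m. Max (f ` {..m}))"
    by (intro LIMSEQ_incseq_SUP)
  moreover have "(SUP m. Max (f ` {..m})) = (SUP j. f j)"
  proof (rule antisym)
    show "(SUP m. Max (f ` {..m})) \<le> (SUP j. f j)" using le by (intro cSUP_least) auto
    have "f j \<le> (SUP m. Max (f ` {..m}))" for j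
    proof -
      have "f j \<le> Max (f ` {..j})" by (intro Max_ge) auto
      also have "\<dots> \<le> (SUP m. Max (f ` {..m}))" using bdd by (intro cSUP_upper) auto
      finally show ?thesis .
    qed
    then show "(SUP j. f j) \<le> (SUP m. Max (f ` {..m}))" by (intro cSUP_least) auto
  qed
  ultimately show ?thesis by simp
qed

lemma
  fixes G :: "nat \<Rightarrow> 'a \<Rightarrow> real"
  assumes G: "\<And>j. G j \<in> borel_measurable M" and W: "integrable M W"
    and bound: "AE x in M. \<forall>j. \<bar>G j x\<bar> \<le> W x"
  shows integrable_SUP_dominated: "integrable M (\<lambda>x. SUP j. G j x)"
    and integral_Max_prefix_tendsto: "(\<lambda>m. \<integral>x. Max ((\<lambda>j. G j x) ` {..m}) \<partial>M) \<longlonglongrightarrow> (\<integral>x. (SUP j. G j x) \<partial>M)"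
proof -
  have bdd: "bdd_above (range (\<lambda>j. G j x))" if "\<forall>j. \<bar>G j x\<bar> \<le> W x" for x
    using that by (intro bdd_aboveI2[of _ _ "W x"]) (auto simp: abs_le_iff)
  have SUP_bound: "\<bar>SUP j. G j x\<bar> \<le> W x" if "\<forall>j. \<bar>G j x\<bar> \<le> W x" for x
  proof -
    have "G 0 x \<le> (SUP j. G j x)" using bdd[OF that] by (intro cSUP_upper) auto
    moreover have "(SUP j. G j x) \<le> W x" using that by (intro cSUP_least) (auto simp: abs_le_iff)
    moreover have "- G 0 x \<le> W x" using that by (auto simp: abs_le_iff)
    ultimately show ?thesis by (simp add: abs_le_iff)
  qed
  have Max_bound: "\<bar>Max ((\<lambda>j. G j x) ` {..m})\<bar> \<le> W x" if "\<forall>j. \<bar>G j x\<bar> \<le> W x" for x m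
  proof -
    have "Max ((\<lambda>j. G j x) ` {..m}) \<in> (\<lambda>j. G j x) ` {..m}" by (intro Max_in) auto
    then obtain j where "Max ((\<lambda>j. G j x) ` {..m}) = G j x" by blast
    then show ?thesis using that by simp
  qed
  have meas: "(\<lambda>x. SUP j. G j x) \<in> borel_measurable M" by (rule borel_measurable_SUP_real[OF G])
  show "integrable M (\<lambda>x. SUP j. G j x)"
    using bound by (intro Bochner_Integration.integrable_bound[OF W meas]) (auto elim!: eventually_mono intro: SUP_bound order_trans)
  show "(\<lambda>m. \<integral>x. Max ((\<lambda>j. G j x) ` {..m}) \<partial>M) \<longlonglongrightarrow> (\<integral>x. (SUP j. G j x) \<partial>M)"
  proof (rule integral_dominated_convergence[OF meas _ W])
    show "(\<lambda>x. Max ((\<lambda>j. G j x) ` {..m})) \<in> borel_measurable M" for m using G by measurable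
    show "AE x in M. (\<lambda>m. Max ((\<lambda>j. G j x) ` {..m})) \<longlonglongrightarrow> (SUP j. G j x)"
      using bound by eventually_elim (rule Max_prefix_tendsto_SUP[OF bdd])
    show "AE x in M. norm (Max ((\<lambda>j. G j x) ` {..m})) \<le> W x" for m
      using bound by eventually_elim (simp add: Max_bound)
  qed
qed

lemma SUP_eq_of_tendsto:
  fixes I :: "'a \<Rightarrow> real"
  assumes "\<And>x. x \<in> S \<Longrightarrow> I x \<le> s" "\<And>m. \<gamma> m \<in> S" "(\<lambda>m. I (\<gamma> m)) \<longlonglongrightarrow> s"
  shows "(SUP x\<in>S. I x) = s"
proof (rule antisym)
  have "S \<noteq> {}" using assms(2) by blast
  then show "(SUP x\<in>S. I x) \<le> s" using assms(1) by (rule cSUP_least)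
  have "bdd_above (I ` S)" using assms(1) by (intro bdd_aboveI2)
  then have "I (\<gamma> m) \<le> (SUP x\<in>S. I x)" for m using assms(2) by (intro cSUP_upper)
  then show "s \<le> (SUP x\<in>S. I x)" by (intro LIMSEQ_le_const2[OF assms(3)]) auto
qed

lemma integral_le_integral_SUP:
  fixes g :: "'a \<Rightarrow> real \<Rightarrow> real"
  assumes int: "integrable M (\<lambda>x. SUP b\<in>S. g x b)"
    and bound: "AE x in M. \<forall>b\<in>S. \<bar>g x b\<bar> \<le> W x"
    and g_0: "0 \<in> S" "\<And>x. g x 0 = 0" and \<gamma>: "\<And>x. \<gamma> x \<in> S"
  shows "(\<integral>x. g x (\<gamma> x) \<partial>M) \<le> (\<integral>x. (SUP b\<in>S. g x b) \<partial>M)"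
proof (rule integral_mono_AE'[OF int])
  have bdd: "bdd_above (g x ` S)" if "\<forall>b\<in>S. \<bar>g x b\<bar> \<le> W x" for x
    using that by (intro bdd_aboveI2[of _ _ "W x"]) (auto simp: abs_le_iff)
  show "AE x in M. g x (\<gamma> x) \<le> (SUP b\<in>S. g x b)"
    using bound by eventually_elim (rule cSUP_upper[OF \<gamma> bdd])
  show "AE x in M. 0 \<le> (SUP b\<in>S. g x b)"
    using bound by eventually_elim (use cSUP_upper[OF g_0(1) bdd] g_0(2) in simp)
qed

lemma aTheta_0 [simp]: "aTheta a \<kappa> r 0 = 0"
  by (simp add: aTheta_eq_levy_drift)

lemma borel_measurable_aTheta:
  assumes a: "a \<in> borel_measurable M" and \<kappa>_sets: "\<And>r. sets (\<kappa> r) = sets borel"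
    and \<kappa>_meas: "\<And>B. B \<in> sets borel \<Longrightarrow> (\<lambda>r. emeasure (\<kappa> r) B) \<in> borel_measurable M"
    and u: "u \<in> borel_measurable M" "finite (range u)"
  shows "(\<lambda>r. aTheta a \<kappa> r (u r)) \<in> borel_measurable M"
proof (rule borel_measurable_finite_range_apply[where F="\<lambda>\<alpha> r. aTheta a \<kappa> r \<alpha>", OF u(2) _ u(1)])
  show "(\<lambda>r. aTheta a \<kappa> r \<alpha>) \<in> borel_measurable M" for \<alpha>
    unfolding aTheta_eq_levy_drift levy_drift_def
    by (intro borel_measurable_add borel_measurable_times borel_measurable_const a
        borel_measurable_kernel_integral[OF \<kappa>_sets \<kappa>_meas borel_measurable_tau_defect])
qed simp

lemma S_det_bounded:
  assumes "f \<in> S_det \<RR>"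
  obtains C where "1 \<le> C" "\<And>r. \<bar>f r\<bar> \<le> C"
proof
  have fin: "finite (insert 1 (abs ` range f))" using S_det_finite_range[OF assms] by simp
  show "1 \<le> Max (insert 1 (abs ` range f))" "\<bar>f r\<bar> \<le> Max (insert 1 (abs ` range f))" for r
    by (rule Max_ge[OF fin], simp)+
qed

lemma borel_measurable_aTheta_S_det:
  assumes dr: "delta_ring R \<RR>" and sets_M: "sets M = sets (sigma R \<RR>)"
    and a: "a \<in> borel_measurable M" and \<kappa>_sets: "\<And>r. sets (\<kappa> r) = sets borel"
    and \<kappa>_meas: "\<And>B. B \<in> sets borel \<Longrightarrow> (\<lambda>r. emeasure (\<kappa> r) B) \<in> borel_measurable M"
    and f: "f \<in> S_det \<RR>"
  shows "(\<lambda>r. aTheta a \<kappa> r (c * f r)) \<in> borel_measurable M"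
proof (rule borel_measurable_aTheta[OF a \<kappa>_sets \<kappa>_meas])
  have "f \<in> borel_measurable M" using dr sets_M f by (intro S_det_borel_measurable) (auto simp: delta_ring_def)
  then show "(\<lambda>r. c * f r) \<in> borel_measurable M" by simp
  have "range (\<lambda>r. c * f r) = (\<lambda>y. c * y) ` range f" by auto
  then show "finite (range (\<lambda>r. c * f r))" using S_det_finite_range[OF f] by simp
qed

lemma aTheta_S_det_dominated:
  assumes dr: "delta_ring R \<RR>" and sets_M: "sets M = sets (sigma R \<RR>)"
    and a: "a \<in> borel_measurable M" "\<And>A. A \<in> \<RR> \<Longrightarrow> set_integrable M A a"
    and \<kappa>_sets: "\<And>r. sets (\<kappa> r) = sets borel"
    and \<kappa>_meas: "\<And>B. B \<in> sets borel \<Longrightarrow> (\<lambda>r. emeasure (\<kappa> r) B) \<in> borel_measurable M"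
    and levy: "\<And>A. A \<in> \<RR> \<Longrightarrow> (\<integral>\<^sup>+r. indicator A r * (\<integral>\<^sup>+x. ennreal (min (x\<^sup>2) 1) \<partial>\<kappa> r) \<partial>M) < \<infinity>"
    and f: "f \<in> S_det \<RR>"
  obtains W where "integrable M W" "AE r in M. \<forall>b\<in>{-1..1}. \<bar>aTheta a \<kappa> r (b * f r)\<bar> \<le> W r"
proof -
  obtain U where U: "U \<in> \<RR>" and f_U: "\<And>r. r \<notin> U \<Longrightarrow> f r = 0"
    by (rule S_det_vanishes_outside[OF dr f]) blast
  have U_sets: "U \<in> sets M" using U dr sets_M by (auto simp: delta_ring_def)
  obtain C where C: "1 \<le> C" "\<And>r. \<bar>f r\<bar> \<le> C" by (rule S_det_bounded[OF f]) blast
  define L where "L r = (\<integral>\<^sup>+x. ennreal (min (x\<^sup>2) 1) \<partial>\<kappa> r)" for r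
  have "(\<lambda>x::real. ennreal (min (x\<^sup>2) 1)) \<in> borel_measurable borel" by measurable
  note borel_measurable_kernel_nn_integral[OF \<kappa>_sets \<kappa>_meas this]
  then have L_meas: "L \<in> borel_measurable M" unfolding L_def[abs_def] by simp
  have L_int: "(\<integral>\<^sup>+r. indicator U r * L r \<partial>M) < \<infinity>" using levy[OF U] by (simp add: L_def)
  define W where "W r = indicator U r * (C * \<bar>a r\<bar> + C^3 * enn2real (L r))" for r
  have "W = (\<lambda>r. C * (indicator U r * \<bar>a r\<bar>) + C^3 * (indicator U r * enn2real (L r)))"
    unfolding W_def by (simp add: fun_eq_iff algebra_simps)
  moreover have "integrable M (\<lambda>r. indicator U r * \<bar>a r\<bar>)"
    using set_integrable_abs[OF a(2)[OF U]] by (simp add: set_integrable_def)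
  ultimately have "integrable M W"
    using integrable_indicator_enn2real[OF U_sets L_meas L_int] by (simp add: integrable_mult_right)
  moreover have "\<bar>aTheta a \<kappa> r (b * f r)\<bar> \<le> W r" if "r \<in> U \<longrightarrow> L r < \<infinity>" "b \<in> {-1..1}" for r b
  proof (cases "r \<in> U")
    case True
    have "\<bar>b\<bar> * \<bar>f r\<bar> \<le> 1 * C" using that(2) C(2)[of r] by (intro mult_mono) auto
    then have "\<bar>b * f r\<bar> \<le> C" by (simp add: abs_mult)
    then show ?thesis
      using abs_levy_drift_le[OF \<kappa>_sets _ _ C(1), of r "b * f r" "a r"] that(1) True
      by (simp add: aTheta_eq_levy_drift W_def L_def)
  qed (simp add: f_U W_def)
  with AE_indicator_finite[OF U_sets L_meas L_int]
  have "AE r in M. \<forall>b\<in>{-1..1}. \<bar>aTheta a \<kappa> r (b * f r)\<bar> \<le> W r" by (auto elim!: eventually_mono)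
  ultimately show ?thesis by (rule that)
qed

lemma S1_det_running_max:
  fixes F :: "'r \<Rightarrow> real \<Rightarrow> real" and q :: "nat \<Rightarrow> real"
  assumes dr: "delta_ring R \<RR>" and sets_M: "sets M = sets (sigma R \<RR>)"
    and U: "U \<in> \<RR>" and f_U: "\<And>r. r \<notin> U \<Longrightarrow> f r = 0" and F_0: "\<And>r. F r 0 = 0"
    and F_meas: "\<And>j. (\<lambda>r. F r (q j * f r)) \<in> borel_measurable M" and q: "\<And>j. \<bar>q j\<bar> \<le> 1"
  shows "\<exists>\<gamma>\<in>S1_det \<RR>. \<forall>r. F r (\<gamma> r * f r) = Max ((\<lambda>j. F r (q j * f r)) ` {..m})"
proof -
  obtain \<gamma> where \<gamma>: "\<gamma> \<in> S1_det \<RR>"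
    and on_U: "\<And>r. r \<in> U \<Longrightarrow> \<exists>j\<le>m. \<gamma> r = q j \<and> F r (q j * f r) = Max ((\<lambda>j. F r (q j * f r)) ` {..m})"
    and off_U: "\<And>r. r \<notin> U \<Longrightarrow> \<gamma> r = 0"
    by (rule S1_det_argmax[where G="\<lambda>j r. F r (q j * f r)" and m=m and q=q, OF dr sets_M U F_meas q]) blast
  have "F r (\<gamma> r * f r) = Max ((\<lambda>j. F r (q j * f r)) ` {..m})" for r
  proof (cases "r \<in> U")
    case True
    then obtain j where "\<gamma> r = q j" "F r (q j * f r) = Max ((\<lambda>j. F r (q j * f r)) ` {..m})"
      using on_U by blast
    then show ?thesis by simp
  next
    case False
    then show ?thesis using f_U off_U by (simp add: F_0)
  qed
  with \<gamma> show ?thesis by blast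
qed

lemma integral_SUP_aTheta_eq_SUP_integral:
  assumes dr: "delta_ring R \<RR>" and sets_M: "sets M = sets (sigma R \<RR>)"
    and a: "a \<in> borel_measurable M" "\<And>A. A \<in> \<RR> \<Longrightarrow> set_integrable M A a"
    and \<kappa>_sets: "\<And>r. sets (\<kappa> r) = sets borel"
    and \<kappa>_meas: "\<And>B. B \<in> sets borel \<Longrightarrow> (\<lambda>r. emeasure (\<kappa> r) B) \<in> borel_measurable M"
    and levy: "\<And>A. A \<in> \<RR> \<Longrightarrow> (\<integral>\<^sup>+r. indicator A r * (\<integral>\<^sup>+x. ennreal (min (x\<^sup>2) 1) \<partial>\<kappa> r) \<partial>M) < \<infinity>"
    and f: "f \<in> S_det \<RR>"
  shows "(\<integral>r. (SUP \<beta>\<in>{-1..1}. aTheta a \<kappa> r (\<beta> * f r)) \<partial>M)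
    = (SUP \<gamma>\<in>S1_det \<RR>. \<integral>r. aTheta a \<kappa> r (\<gamma> r * f r) \<partial>M)"
proof -
  obtain W where W: "integrable M W" and bound: "AE r in M. \<forall>b\<in>{-1..1}. \<bar>aTheta a \<kappa> r (b * f r)\<bar> \<le> W r"
    by (rule aTheta_S_det_dominated[OF dr sets_M a \<kappa>_sets \<kappa>_meas levy f]) blast
  obtain U where U: "U \<in> \<RR>" "\<And>r. r \<notin> U \<Longrightarrow> f r = 0"
    by (rule S_det_vanishes_outside[OF dr f]) blast
  define q where "q = from_nat_into (\<rat> \<inter> {-1..1::real})"
  have q_range: "range q = \<rat> \<inter> {-1..1}"
    unfolding q_def by (intro range_from_nat_into countable_Int1 countable_rat) force
  then have q: "q j \<in> {-1..1}" "\<bar>q j\<bar> \<le> 1" for j by (auto simp: abs_le_iff)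
  define G where "G j r = aTheta a \<kappa> r (q j * f r)" for j r
  note G_meas = borel_measurable_aTheta_S_det[OF dr sets_M a(1) \<kappa>_sets \<kappa>_meas f]
  have SUP_G: "(SUP \<beta>\<in>{-1..1}. aTheta a \<kappa> r (\<beta> * f r)) = (SUP j. G j r)" for r
    using SUP_levy_drift_Rats[OF \<kappa>_sets[of r], of "a r" "f r"]
    by (simp add: aTheta_eq_levy_drift G_def q_range[symmetric] image_comp)
  have G_bound: "AE r in M. \<forall>j. \<bar>G j r\<bar> \<le> W r"
    using bound by eventually_elim (unfold G_def, use q(1) in blast)
  have "\<exists>\<gamma>\<in>S1_det \<RR>. \<forall>r. aTheta a \<kappa> r (\<gamma> r * f r) = Max ((\<lambda>j. G j r) ` {..m})" for m
    unfolding G_def by (rule S1_det_running_max[OF dr sets_M U aTheta_0 G_meas q(2)])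
  then obtain \<gamma> where \<gamma>: "\<And>m. \<gamma> m \<in> S1_det \<RR>"
    and \<gamma>_max: "\<And>m r. aTheta a \<kappa> r (\<gamma> m r * f r) = Max ((\<lambda>j. G j r) ` {..m})"
    by metis
  have "(\<lambda>m. \<integral>r. aTheta a \<kappa> r (\<gamma> m r * f r) \<partial>M) \<longlonglongrightarrow> (\<integral>r. (SUP j. G j r) \<partial>M)"
    unfolding \<gamma>_max using G_meas W G_bound by (intro integral_Max_prefix_tendsto) (simp_all add: G_def)
  moreover have "integrable M (\<lambda>r. SUP \<beta>\<in>{-1..1}. aTheta a \<kappa> r (\<beta> * f r))"
    unfolding SUP_G using G_meas W G_bound by (intro integrable_SUP_dominated) (simp_all add: G_def)
  then have "(\<integral>r. aTheta a \<kappa> r (\<gamma> r * f r) \<partial>M) \<le> (\<integral>r. (SUP j. G j r) \<partial>M)" if "\<gamma> \<in> S1_det \<RR>" for \<gamma>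
    unfolding SUP_G[symmetric] using bound S1_det_abs_le_1[OF that]
    by (intro integral_le_integral_SUP[where g="\<lambda>r \<beta>. aTheta a \<kappa> r (\<beta> * f r)"]) (auto simp: abs_le_iff)
  ultimately show ?thesis
    unfolding SUP_G by (intro SUP_eq_of_tendsto[symmetric, OF _ \<gamma>]) auto
qed

theorem lemma3p8:
  fixes P :: "'w measure" and R :: "'r set" and \<RR> :: "'r set set"
    and \<Theta> :: "'r set \<Rightarrow> 'w \<Rightarrow> real"
    and ap am q0 chi :: "'r measure" and lam0 :: "('r \<times> real) measure"
    and a :: "'r \<Rightarrow> real" and \<kappa> :: "'r \<Rightarrow> real measure"
    and f :: "'r \<Rightarrow> real"
  assumes ID: "ID_random_measure P R \<RR> \<Theta>"
    \<comment> \<open>the signed measure a0 = ap - am (Jordan decomposition), and q0, on sigma(\<RR>)\<close>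
    and sets_ap: "sets ap = sets (sigma R \<RR>)"
    and sets_am: "sets am = sets (sigma R \<RR>)"
    and sing: "\<exists>S \<in> sets (sigma R \<RR>). emeasure ap (R - S) = 0 \<and> emeasure am S = 0"
    and fin_a: "\<forall>A\<in>\<RR>. emeasure ap A < \<infinity> \<and> emeasure am A < \<infinity>"
    and sets_q0: "sets q0 = sets (sigma R \<RR>)"
    and fin_q0: "\<forall>A\<in>\<RR>. emeasure q0 A < \<infinity>"
    \<comment> \<open>the sigma-finite measure lambda0 on sigma(\<RR>) x B(R)\<close>
    and sets_lam0: "sets lam0 = sets (sigma R \<RR> \<Otimes>\<^sub>M borel)"
    and sf_lam0: "sigma_finite_measure lam0"
    and levy_lam0: "\<forall>A\<in>\<RR>. emeasure lam0 (A \<times> {0}) = 0 \<and>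
                    (\<integral>\<^sup>+x. indicator (A \<times> UNIV) x * ennreal (min ((snd x)\<^sup>2) 1) \<partial>lam0) < \<infinity>"
    \<comment> \<open>Levy-Khintchine representation of the values of Theta\<close>
    and LK: "\<forall>A\<in>\<RR>. \<forall>\<beta>::real. char (distr P borel (\<Theta> A)) \<beta> =
              exp (\<i> * complex_of_real (\<beta> * (measure ap A - measure am A))
                   - complex_of_real (\<beta>\<^sup>2 / 2 * measure q0 A)
                   + set_lebesgue_integral lam0 (A \<times> UNIV)
                       (\<lambda>x. iexp (\<beta> * snd x) - 1 - \<i> * complex_of_real (\<beta> * tau (snd x))))"
    \<comment> \<open>the control measure chi\<close>
    and sets_chi: "sets chi = sets (sigma R \<RR>)"
    and chi_def: "\<forall>A\<in>sets (sigma R \<RR>). emeasure chi A =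
              emeasure ap A + emeasure am A + emeasure q0 A +
              (\<integral>\<^sup>+x. indicator (A \<times> UNIV) x * ennreal (min ((snd x)\<^sup>2) 1) \<partial>lam0)"
    \<comment> \<open>a = d a0 / d chi\<close>
    and a_meas: "a \<in> borel_measurable chi"
    and a_dens: "\<forall>A\<in>\<RR>. set_integrable chi A a \<and>
              measure ap A - measure am A = set_lebesgue_integral chi A a"
    \<comment> \<open>kappa is a kernel with lambda0(dr, d beta) = kappa(r, d beta) chi(dr)\<close>
    and \<kappa>_sets: "\<forall>r. sets (\<kappa> r) = sets borel"
    and \<kappa>_meas: "\<forall>B\<in>sets borel. (\<lambda>r. emeasure (\<kappa> r) B) \<in> borel_measurable chi"
    and \<kappa>_disint: "\<forall>X\<in>sets lam0. emeasure lam0 X = (\<integral>\<^sup>+r. emeasure (\<kappa> r) (Pair r -` X) \<partial>chi)"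
    and f: "f \<in> S_det \<RR>"
  shows "(\<integral>r. (SUP \<beta>\<in>{-1..1}. aTheta a \<kappa> r (\<beta> * f r)) \<partial>chi) =
         (SUP \<gamma>\<in>S1_det \<RR>. (\<integral>r. aTheta a \<kappa> r (\<gamma> r * f r) \<partial>chi))"
proof -
  have dr: "delta_ring R \<RR>" using ID by (simp add: ID_random_measure_def admissible_space_def)
  have \<RR>_sets: "A \<in> sets (sigma R \<RR>)" if "A \<in> \<RR>" for A
    using that dr by (auto simp: delta_ring_def)
  have min_meas: "(\<lambda>x::real. ennreal (min (x\<^sup>2) 1)) \<in> borel_measurable borel" by measurable
  have levy: "(\<integral>\<^sup>+r. indicator A r * (\<integral>\<^sup>+x. ennreal (min (x\<^sup>2) 1) \<partial>\<kappa> r) \<partial>chi) < \<infinity>" if "A \<in> \<RR>" for A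
  proof -
    have "(\<integral>\<^sup>+r. indicator A r * (\<integral>\<^sup>+x. ennreal (min (x\<^sup>2) 1) \<partial>\<kappa> r) \<partial>chi)
        = (\<integral>\<^sup>+p. indicator (A \<times> UNIV) p * ennreal (min ((snd p)\<^sup>2) 1) \<partial>lam0)"
      using nn_integral_kernel_disintegration[OF sets_lam0 sets_chi \<kappa>_sets[rule_format] \<kappa>_meas[rule_format]
          \<kappa>_disint[rule_format] \<RR>_sets[OF that] min_meas]
      by simp
    also have "\<dots> < \<infinity>" using levy_lam0 that by blast
    finally show ?thesis .
  qed
  show ?thesis
    using a_dens
    by (intro integral_SUP_aTheta_eq_SUP_integral[OF dr sets_chi a_meas _ \<kappa>_sets[rule_format]
          \<kappa>_meas[rule_format] levy f]) auto
qed

end
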